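(* Let $(t_j^i)_{0\le j\le i}$ be real numbers and let $h_{j,k}^i$ ($0\le k\le i$, $0\le j\le i-k$) be defined by $h_{j,0}^i=t_j^i$ and $h_{j,k}^i=h_{j,k-1}^{i-1}+h_{j,k-1}^{i}+h_{j+1,k-1}^{i}$ for $k\ge 1$. Define the tetrahedron coefficient transform $b_n=\sum_{i=0}^{n}\sum_{j=0}^{i}\binom{n}{j,\,n-i,\,i-j}t_j^i$. Then $h_{0,n}^n=b_n$ for every $n\ge 0$.
   Context: For non-negative integers $p,q,r$ with $p+q+r=n$, $\binom{n}{p,q,r}=\frac{n!}{p!\,q!\,r!}$ denotes the tetrahedron trinomial coefficient. *)

theory Defs
  imports Complex_Main
begin

text \<open>Tetrahedron trinomial coefficient (n; p,q,r) = n!/(p! q! r!), meant for p+q+r = n.\<close>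
definition trinom :: "nat \<Rightarrow> nat \<Rightarrow> nat \<Rightarrow> nat \<Rightarrow> nat" where
  "trinom n p q r = fact n div (fact p * fact q * fact r)"

text \<open>hh t i j k stands for h^i_{j,k}; t i j stands for t^i_j.
  Only the values with 0 <= k <= i, 0 <= j <= i-k are meaningful.\<close>
fun hh :: "(nat \<Rightarrow> nat \<Rightarrow> real) \<Rightarrow> nat \<Rightarrow> nat \<Rightarrow> nat \<Rightarrow> real" where
  "hh t i j 0 = t i j"
| "hh t i j (Suc k) = hh t (i - 1) j k + hh t i j k + hh t i (j + 1) k"

end

theory Submission
  imports Defs
begin

text \<open>The recursion is h_k = (D + S) h_{k-1} for the commuting operators
  (D f) i j = f (i-1) j and (S f) i j = f i j + f i (j+1). Hence
  h_k = \<Sum>a. (k choose a) D^a S^(k-a) t, and S^m is a binomial sum over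
  shifts in j. At i = k = n, the index a = n - i picks out row i of t, and
  (n choose i)(i choose j) is the tetrahedron coefficient.\<close>

lemma sum_atMost_Suc_binomial_split:
  fixes f :: "nat \<Rightarrow> 'a::comm_semiring_1"
  shows "(\<Sum>a\<le>Suc k. of_nat (Suc k choose a) * f a)
       = (\<Sum>a\<le>Suc k. of_nat (k choose a) * f a) + (\<Sum>a\<le>k. of_nat (k choose a) * f (Suc a))"
  by (simp only: sum.atMost_Suc_shift binomial_Suc_Suc of_nat_add distrib_right sum.distrib) (simp add: ac_simps)

definition shift_sum :: "(nat \<Rightarrow> nat \<Rightarrow> real) \<Rightarrow> nat \<Rightarrow> nat \<Rightarrow> nat \<Rightarrow> real" where
  "shift_sum t m i j = (\<Sum>b\<le>m. real (m choose b) * t i (j + b))"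

lemma shift_sum_0 [simp]: "shift_sum t 0 i j = t i j"
  by (simp add: shift_sum_def)

lemma shift_sum_Suc: "shift_sum t (Suc m) i j = shift_sum t m i j + shift_sum t m i (j + 1)"
  unfolding shift_sum_def by (subst sum_atMost_Suc_binomial_split) (simp add: sum.atMost_Suc)

lemma hh_eq_binomial_shift_sum:
  "hh t i j k = (\<Sum>a\<le>k. real (k choose a) * shift_sum t (k - a) (i - a) j)"
proof (induction k arbitrary: i j)
  case 0
  then show ?case by simp
next
  case (Suc k)
  let ?g = "\<lambda>a. shift_sum t (Suc k - a) (i - a) j"
  have shift_terms: "(\<Sum>a\<le>Suc k. real (k choose a) * ?g a) = hh t i j k + hh t i (j + 1) k"
    by (simp add: Suc.IH Suc_diff_le shift_sum_Suc algebra_simps sum.distrib)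
  have down_terms: "(\<Sum>a\<le>k. real (k choose a) * ?g (Suc a)) = hh t (i - 1) j k"
    by (simp add: Suc.IH)
  show ?case
    using sum_atMost_Suc_binomial_split[of k ?g] shift_terms down_terms by simp
qed

lemma trinom_eq_choose_mult:
  assumes "j \<le> i" "i \<le> n"
  shows "trinom n j (n - i) (i - j) = (n choose i) * (i choose j)"
proof -
  have "fact n = (n choose i) * fact i * fact (n - i)"
    using binomial_fact_lemma[OF assms(2)] by (simp add: algebra_simps)
  moreover have "fact i = (i choose j) * fact j * fact (i - j)"
    using binomial_fact_lemma[OF assms(1)] by (simp add: algebra_simps)
  ultimately have "(fact n :: nat)
      = ((n choose i) * (i choose j)) * (fact j * fact (n - i) * fact (i - j))"
    by (simp add: algebra_simps)
  then show ?thesis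
    unfolding trinom_def by simp
qed

theorem theorem2:
  fixes t :: "nat \<Rightarrow> nat \<Rightarrow> real" and n :: nat
  shows "hh t n 0 n = (\<Sum>i=0..n. \<Sum>j=0..i. real (trinom n j (n - i) (i - j)) * t i j)"
proof -
  have "hh t n 0 n = (\<Sum>a\<le>n. real (n choose a) * shift_sum t (n - a) (n - a) 0)"
    by (simp add: hh_eq_binomial_shift_sum)
  also have "\<dots> = (\<Sum>i\<le>n. real (n choose i) * shift_sum t i i 0)"
    by (rule sum.reindex_bij_witness[where i="\<lambda>i. n - i" and j="\<lambda>a. n - a"])
       (auto simp: binomial_symmetric[symmetric])
  also have "\<dots> = (\<Sum>i\<le>n. \<Sum>j\<le>i. real (trinom n j (n - i) (i - j)) * t i j)"
    unfolding shift_sum_def sum_distrib_left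
    by (intro sum.cong refl) (simp add: trinom_eq_choose_mult mult.assoc)
  finally show ?thesis
    by (simp add: atLeast0AtMost)
qed

end
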